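(* The operator $G:=A^2-\frac{w^2}{2}I$, with domain $\mathsf{D}(A^2)=\{f\in\mathsf{D}(A):Af\in\mathsf{D}(A)\}$, is maximal dissipative on $H$.
   Context: Fix $w>0$ and let $L^2_w:=L^2(\mathbb{R},e^{wx}dx)$. $H=H(\mathbb{R})$ is the Hilbert space of absolutely continuous $f\in L^1_{\mathrm{loc}}(\mathbb{R})$ with $f'\in L^2_w$, with inner product $\langle f,g\rangle:=\lim_{x\to+\infty}f(x)g(x)+\langle f',g'\rangle_{L^2_w}$ (the limit $f(+\infty)$ exists for $f\in H$). $A$ is the generator of the translation semigroup $(S_A(t)f)(x)=f(x+t)$ on $H$, i.e. $Af=f'$ on $\mathsf{D}(A)=\{f\in H: f'\in H\}$. *)

theory Defs
  imports "HOL-Analysis.Analysis"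
begin

definition L2w :: "real \<Rightarrow> (real \<Rightarrow> real) \<Rightarrow> bool" where
  "L2w w g \<longleftrightarrow> g \<in> borel_measurable lborel \<and>
     integrable lborel (\<lambda>x. (g x)\<^sup>2 * exp (w * x))"

text \<open>g is an (a.e.) derivative of the absolutely continuous function f, with g in L^2_w:
  f is the indefinite integral of the locally integrable g.\<close>
definition wderiv :: "real \<Rightarrow> (real \<Rightarrow> real) \<Rightarrow> (real \<Rightarrow> real) \<Rightarrow> bool" where
  "wderiv w f g \<longleftrightarrow> L2w w g \<and>
     (\<forall>a b. a \<le> b \<longrightarrow> set_integrable lborel {a..b} g \<and>
                          f b - f a = (LINT x:{a..b}|lborel. g x))"

definition Hsp :: "real \<Rightarrow> (real \<Rightarrow> real) set" where
  "Hsp w = {f. \<exists>g. wderiv w f g}"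

text \<open>A chosen representative of f'.\<close>
definition dH :: "real \<Rightarrow> (real \<Rightarrow> real) \<Rightarrow> (real \<Rightarrow> real)" where
  "dH w f = (SOME g. wderiv w f g)"

definition Hinner :: "real \<Rightarrow> (real \<Rightarrow> real) \<Rightarrow> (real \<Rightarrow> real) \<Rightarrow> real" where
  "Hinner w f g = Lim at_top (\<lambda>x. f x * g x)
      + (LINT x|lborel. dH w f x * dH w g x * exp (w * x))"

definition DA :: "real \<Rightarrow> (real \<Rightarrow> real) set" where
  "DA w = {f \<in> Hsp w. \<exists>h \<in> Hsp w. wderiv w f h}"

text \<open>A f = f' (the representative in H, i.e. the absolutely continuous one).\<close>
definition Aop :: "real \<Rightarrow> (real \<Rightarrow> real) \<Rightarrow> (real \<Rightarrow> real)" where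
  "Aop w f = (SOME h. h \<in> Hsp w \<and> wderiv w f h)"

definition DA2 :: "real \<Rightarrow> (real \<Rightarrow> real) set" where
  "DA2 w = {f \<in> DA w. Aop w f \<in> DA w}"

definition Gop :: "real \<Rightarrow> (real \<Rightarrow> real) \<Rightarrow> (real \<Rightarrow> real)" where
  "Gop w f = (\<lambda>x. Aop w (Aop w f) x - (w\<^sup>2 / 2) * f x)"

definition maximal_dissipative ::
  "(real \<Rightarrow> real) set \<Rightarrow> ((real \<Rightarrow> real) \<Rightarrow> (real \<Rightarrow> real) \<Rightarrow> real)
   \<Rightarrow> (real \<Rightarrow> real) set \<Rightarrow> ((real \<Rightarrow> real) \<Rightarrow> (real \<Rightarrow> real)) \<Rightarrow> bool" where
  "maximal_dissipative X ip D T \<longleftrightarrow>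
     D \<subseteq> X \<and> (\<forall>f\<in>D. T f \<in> X) \<and> (\<forall>f\<in>D. ip (T f) f \<le> 0) \<and>
     (\<forall>h\<in>X. \<exists>f\<in>D. (\<lambda>x. f x - T f x) = h)"

end

theory Submission
  imports Defs "HOL-Real_Asymp.Real_Asymp"
begin

text \<open>
  Dissipativity. For f in D(A^2) write a = f', b = f'' = A^2 f and c = b'. The function
  b a e^(wx) - (w/2) a^2 e^(wx) and its derivative c a e^(wx) + b^2 e^(wx) - (w^2/2) a^2 e^(wx)
  are both integrable, so the latter has integral zero. Hence the L^2_w part of the inner product
  of G f with f equals minus the squared L^2_w norm of A^2 f. Moreover A^2 f has a limit at
  +infinity which must vanish because A^2 f is in L^2_w, so the boundary term of the inner
  product is -(w^2/2) f(+infinity)^2.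

  Surjectivity. Put k = sqrt (1 + w^2/2); then f - G f = h reads k^2 f - f'' = h. The derivative
  u = f' must solve k^2 u - u'' = g := h', whose decaying solution is the convolution of g with
  e^(-k|t|)/(2k). Split it into the one-sided convolutions with e^(-kt) on t >= 0 and on t <= 0.
  Multiplying by e^(wx/2) identifies L^2_w with L^2 and turns these into integral operators with
  the kernels e^(-(k - w/2)(x - y)) on y <= x and e^(-(k + w/2)(y - x)) on y >= x, which are
  bounded on L^2 by the Schur test since k > w/2. Then f = (h + u')/k^2 lies in D(A^2) and solves the equation.
\<close>

section \<open>Locally absolutely continuous functions\<close>

definition ac_deriv :: "(real \<Rightarrow> real) \<Rightarrow> (real \<Rightarrow> real) \<Rightarrow> bool" where
  "ac_deriv F g \<longleftrightarrow> (\<forall>a b. a \<le> b \<longrightarrow> set_integrable lborel {a..b} g \<and>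
                          F b - F a = (LINT x:{a..b}|lborel. g x))"

lemma wderiv_iff: "wderiv w f g \<longleftrightarrow> L2w w g \<and> ac_deriv f g"
  by (simp add: wderiv_def ac_deriv_def)

lemma ac_derivD:
  assumes "ac_deriv F g" "a \<le> b"
  shows "set_integrable lborel {a..b} g" "F b - F a = (LINT x:{a..b}|lborel. g x)"
  using assms by (auto simp: ac_deriv_def)

lemma ac_deriv_add:
  assumes "ac_deriv F f" "ac_deriv G g"
  shows "ac_deriv (\<lambda>x. F x + G x) (\<lambda>x. f x + g x)"
  unfolding ac_deriv_def
proof (intro allI impI conjI)
  fix a b :: real assume "a \<le> b"
  note f = ac_derivD[OF assms(1) this] and g = ac_derivD[OF assms(2) this]
  show "set_integrable lborel {a..b} (\<lambda>x. f x + g x)" using f g by simp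
  show "F b + G b - (F a + G a) = (LINT x:{a..b}|lborel. f x + g x)"
    using f g by (simp add: set_integral_add)
qed

lemma ac_deriv_diff:
  assumes "ac_deriv F f" "ac_deriv G g"
  shows "ac_deriv (\<lambda>x. F x - G x) (\<lambda>x. f x - g x)"
  unfolding ac_deriv_def
proof (intro allI impI conjI)
  fix a b :: real assume "a \<le> b"
  note f = ac_derivD[OF assms(1) this] and g = ac_derivD[OF assms(2) this]
  show "set_integrable lborel {a..b} (\<lambda>x. f x - g x)" using f g by simp
  show "F b - G b - (F a - G a) = (LINT x:{a..b}|lborel. f x - g x)"
    using f g by (simp add: set_integral_diff)
qed

lemma ac_deriv_cmult: "ac_deriv F f \<Longrightarrow> ac_deriv (\<lambda>x. c * F x) (\<lambda>x. c * f x)"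
  by (auto simp: ac_deriv_def set_integrable_mult_right right_diff_distrib[symmetric])

lemma ac_deriv_cong: "ac_deriv F f \<Longrightarrow> (\<And>x. F x = G x) \<Longrightarrow> (\<And>x. f x = g x) \<Longrightarrow> ac_deriv G g"
  by (metis ext)

lemma ac_deriv_if_has_real_derivative:
  assumes "\<And>x. (F has_real_derivative f x) (at x)" "continuous_on UNIV f"
  shows "ac_deriv F f"
  unfolding ac_deriv_def
proof (intro allI impI conjI)
  fix a b :: real assume "a \<le> b"
  have "continuous_on {a..b} f" using assms(2) by (rule continuous_on_subset) auto
  then show "set_integrable lborel {a..b} f"
    by (rule borel_integrable_atLeastAtMost')
  have "(LINT x:{a..b}|lborel. f x) = (\<integral>x. f x * indicator {a .. b} x \<partial>lborel)"
    by (simp add: set_lebesgue_integral_def mult.commute)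
  also have "\<dots> = F b - F a"
    using \<open>a \<le> b\<close> assms by (intro integral_FTC_Icc_real) (auto simp: continuous_on_eq_continuous_at)
  finally show "F b - F a = (LINT x:{a..b}|lborel. f x)" by simp
qed

lemma ac_deriv_exp: "ac_deriv (\<lambda>x. exp (c * x)) (\<lambda>x. c * exp (c * x))"
  by (rule ac_deriv_if_has_real_derivative) (auto intro!: derivative_eq_intros continuous_intros)

lemma continuous_on_ac_deriv:
  assumes "ac_deriv F g"
  shows "continuous_on UNIV F"
proof -
  have "isCont F x0" for x0
  proof -
    let ?a = "x0 - 1" and ?b = "x0 + 1"
    have "g integrable_on {?a..?b}"
      using set_borel_integral_eq_integral(1)[OF ac_derivD(1)[OF assms]] by simp
    then have "continuous_on {?a..?b} (\<lambda>t. F ?a + integral {?a..t} g)"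
      by (intro continuous_intros indefinite_integral_continuous_1)
    moreover have "F t = F ?a + integral {?a..t} g" if "t \<in> {?a..?b}" for t
      using ac_derivD[OF assms, of ?a t] that set_borel_integral_eq_integral(2) by force
    ultimately have "continuous_on {?a..?b} F"
      using continuous_on_eq by (metis (no_types, lifting))
    then show ?thesis
      by (rule continuous_on_interior) auto
  qed
  then show ?thesis by (simp add: continuous_on_eq_continuous_at)
qed

lemma integral_swap_triangle:
  fixes a b :: "real \<Rightarrow> real"
  assumes ia: "integrable lborel a" and ib: "integrable lborel b"
  shows "(\<integral>x. a x * (\<integral>y. b y * indicator {..x} y \<partial>lborel) \<partial>lborel)
       = (\<integral>y. b y * (\<integral>x. a x * indicator {y..} x \<partial>lborel) \<partial>lborel)"
proof -
  have [measurable]: "a \<in> borel_measurable borel" "b \<in> borel_measurable borel"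
    using ia ib by auto
  define H where "H = (\<lambda>(x::real,y::real). a x * b y * indicator {..x} y)"
  have Hm[measurable]: "H \<in> borel_measurable (lborel \<Otimes>\<^sub>M lborel)"
    unfolding H_def indicator_def atMost_iff by measurable
  have H_bound: "norm (H (x, y)) \<le> norm (a x * b y)" for x y
    by (simp add: H_def abs_mult split: split_indicator)
  have H_x: "integrable lborel (\<lambda>y. H (x, y))" for x
  proof (rule Bochner_Integration.integrable_bound[OF _ _ AE_I2[OF H_bound]])
    show "integrable lborel (\<lambda>y. a x * b y)" using ib by simp
    have "(\<lambda>y. H (x,y)) = (\<lambda>y. a x * b y * indicator {..x} y)" by (simp add: H_def)
    then show "(\<lambda>y. H (x,y)) \<in> borel_measurable lborel" by simp
  qed
  have "integrable (lborel \<Otimes>\<^sub>M lborel) H"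
  proof (rule lborel_pair.Fubini_integrable[OF Hm])
    have "(\<integral>y. norm (H (x, y)) \<partial>lborel) \<le> (\<integral>y. norm (a x * b y) \<partial>lborel)" for x
      by (rule integral_mono[OF integrable_norm[OF H_x] _ H_bound]) (use ib in simp)
    then have bound: "norm (\<integral>y. norm (H (x, y)) \<partial>lborel) \<le> norm (a x * (\<integral>y. norm (b y) \<partial>lborel))" for x
      by (simp add: abs_mult)
    show "integrable lborel (\<lambda>x. \<integral>y. norm (H (x, y)) \<partial>lborel)"
    proof (rule Bochner_Integration.integrable_bound[where f="\<lambda>x. a x * (\<integral>y. norm (b y) \<partial>lborel)"])
      show "integrable lborel (\<lambda>x. a x * (\<integral>y. norm (b y) \<partial>lborel))" using ia by simp
      show "AE x in lborel. norm (\<integral>y. norm (H (x, y)) \<partial>lborel) \<le> norm (a x * (\<integral>y. norm (b y) \<partial>lborel))"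
        using bound by simp
    qed measurable
    show "AE x in lborel. integrable lborel (\<lambda>y. H (x, y))"
      using H_x by simp
  qed
  then have "(\<integral>y. (\<integral>x. H (x,y) \<partial>lborel) \<partial>lborel) = (\<integral>x. (\<integral>y. H (x,y) \<partial>lborel) \<partial>lborel)"
    by (rule lborel_pair.Fubini_integral[of "\<lambda>x y. H (x,y)", simplified])
  moreover have "(\<integral>x. H (x,y) \<partial>lborel) = b y * (\<integral>x. a x * indicator {y..} x \<partial>lborel)" for y
  proof -
    have "H (x,y) = b y * (a x * indicator {y..} x)" for x
      by (simp add: H_def split: split_indicator)
    then show ?thesis by simp
  qed
  moreover have "(\<integral>y. H (x,y) \<partial>lborel) = a x * (\<integral>y. b y * indicator {..x} y \<partial>lborel)" for x
    by (simp add: H_def mult.assoc)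
  ultimately show ?thesis by simp
qed

lemma set_integrable_mult_continuous:
  fixes f G :: "real \<Rightarrow> real"
  assumes f: "set_integrable lborel {s..t} f" and G: "continuous_on UNIV G"
  shows "set_integrable lborel {s..t} (\<lambda>x. f x * G x)"
proof -
  have "compact (G ` {s..t})"
    by (rule compact_continuous_image) (auto intro: continuous_on_subset[OF G])
  then obtain B where B: "\<And>x. x \<in> {s..t} \<Longrightarrow> norm (G x) \<le> B"
    by (meson bounded_iff compact_imp_bounded image_eqI)
  have fm: "(\<lambda>x. indicator {s..t} x *\<^sub>R f x) \<in> borel_measurable lborel"
    using f unfolding set_integrable_def by auto
  have Gm: "G \<in> borel_measurable lborel"
    using G by (simp add: borel_measurable_continuous_onI)
  show ?thesis
    unfolding set_integrable_def
  proof (rule Bochner_Integration.integrable_bound[where f="\<lambda>x. B * (indicator {s..t} x *\<^sub>R f x)"])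
    show "integrable lborel (\<lambda>x. B * (indicator {s..t} x *\<^sub>R f x))"
      using f unfolding set_integrable_def by (rule integrable_mult_right)
    have e: "(\<lambda>x. indicator {s..t} x *\<^sub>R (f x * G x)) = (\<lambda>x. (indicator {s..t} x *\<^sub>R f x) * G x)"
      by auto
    show "(\<lambda>x. indicator {s..t} x *\<^sub>R (f x * G x)) \<in> borel_measurable lborel"
      unfolding e using fm Gm by (rule borel_measurable_times)
    show "AE x in lborel. norm (indicator {s..t} x *\<^sub>R (f x * G x)) \<le> norm (B * (indicator {s..t} x *\<^sub>R f x))"
    proof (rule AE_I2)
      fix x
      show "norm (indicator {s..t} x *\<^sub>R (f x * G x)) \<le> norm (B * (indicator {s..t} x *\<^sub>R f x))"
      proof (cases "x \<in> {s..t}")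
        case True
        then have "\<bar>G x\<bar> \<le> B" using B by simp
        then have "\<bar>f x\<bar> * \<bar>G x\<bar> \<le> \<bar>f x\<bar> * \<bar>B\<bar>" by (intro mult_left_mono) auto
        then show ?thesis using True by (simp add: abs_mult mult.commute)
      qed simp
    qed
  qed
qed

lemma set_integral_product_rule:
  assumes fF: "ac_deriv F f" and gG: "ac_deriv G g" and st: "s \<le> t"
  shows "(LINT x:{s..t}|lborel. f x * G x) + (LINT x:{s..t}|lborel. F x * g x) = F t * G t - F s * G s"
proof -
  have sf: "set_integrable lborel {s..t} f" and sg: "set_integrable lborel {s..t} g"
    using ac_derivD(1) fF gG st by auto
  define a where "a = (\<lambda>x. indicator {s..t} x * g x)"
  define b where "b = (\<lambda>x. indicator {s..t} x * f x)"
  have ia: "integrable lborel a" using sg unfolding a_def set_integrable_def by simp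
  have ib: "integrable lborel b" using sf unfolding b_def set_integrable_def by simp
  have F_eq: "a x * (\<integral>y. b y * indicator {..x} y \<partial>lborel) = a x * (F x - F s)" for x
  proof (cases "x \<in> {s..t}")
    case True
    have "(\<integral>y. b y * indicator {..x} y \<partial>lborel) = (LINT y:{s..x}|lborel. f y)"
      unfolding set_lebesgue_integral_def b_def using True
      by (intro Bochner_Integration.integral_cong) (auto split: split_indicator)
    then show ?thesis using ac_derivD(2)[OF fF, of s x] True by simp
  qed (simp add: a_def)
  have G_eq: "b y * (\<integral>x. a x * indicator {y..} x \<partial>lborel) = b y * (G t - G y)" for y
  proof (cases "y \<in> {s..t}")
    case True
    have "(\<integral>x. a x * indicator {y..} x \<partial>lborel) = (LINT x:{y..t}|lborel. g x)"
      unfolding set_lebesgue_integral_def a_def using True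
      by (intro Bochner_Integration.integral_cong) (auto split: split_indicator)
    then show ?thesis using ac_derivD(2)[OF gG, of y t] True by simp
  qed (simp add: b_def)
  have iaF: "integrable lborel (\<lambda>x. a x * F x)" and ibG: "integrable lborel (\<lambda>x. b x * G x)"
    using set_integrable_mult_continuous[OF sg continuous_on_ac_deriv[OF fF]]
      set_integrable_mult_continuous[OF sf continuous_on_ac_deriv[OF gG]]
    unfolding a_def b_def set_integrable_def by (simp_all add: mult.assoc)
  have "(\<integral>x. a x * (F x - F s) \<partial>lborel) = (\<integral>y. b y * (G t - G y) \<partial>lborel)"
    using integral_swap_triangle[OF ia ib] F_eq G_eq by simp
  then have "(\<integral>x. a x * F x \<partial>lborel) - F s * (\<integral>x. a x \<partial>lborel)
      = G t * (\<integral>x. b x \<partial>lborel) - (\<integral>x. b x * G x \<partial>lborel)"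
    using ia ib iaF ibG by (simp add: right_diff_distrib mult.commute[of _ "F s"] mult.commute[of _ "G t"])
  moreover have "(\<integral>x. a x \<partial>lborel) = G t - G s" "(\<integral>x. b x \<partial>lborel) = F t - F s"
    using ac_derivD(2)[OF gG st] ac_derivD(2)[OF fF st] unfolding a_def b_def set_lebesgue_integral_def by simp_all
  moreover have "(LINT x:{s..t}|lborel. f x * G x) = (\<integral>x. b x * G x \<partial>lborel)"
    "(LINT x:{s..t}|lborel. F x * g x) = (\<integral>x. a x * F x \<partial>lborel)"
    unfolding a_def b_def set_lebesgue_integral_def by (simp_all add: mult_ac)
  ultimately show ?thesis by (simp add: algebra_simps)
qed

lemma ac_deriv_mult:
  assumes "ac_deriv F f" "ac_deriv G g"
  shows "ac_deriv (\<lambda>x. F x * G x) (\<lambda>x. f x * G x + F x * g x)"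
  unfolding ac_deriv_def
proof (intro allI impI conjI)
  fix s t :: real assume st: "s \<le> t"
  have fG: "set_integrable lborel {s..t} (\<lambda>x. f x * G x)"
    and gF: "set_integrable lborel {s..t} (\<lambda>x. g x * F x)"
    using set_integrable_mult_continuous ac_derivD(1)[OF _ st] continuous_on_ac_deriv assms by blast+
  then show "set_integrable lborel {s..t} (\<lambda>x. f x * G x + F x * g x)"
    by (simp add: set_integral_add mult.commute)
  show "F t * G t - F s * G s = (LINT x:{s..t}|lborel. f x * G x + F x * g x)"
    using set_integral_product_rule[OF assms st] fG gF by (simp add: set_integral_add mult.commute)
qed

lemma AE_zero_if_integrals_greaterThan_zero:
  fixes z :: "real \<Rightarrow> real"
  assumes z: "integrable lborel z" and zi: "\<And>c. (LINT x:{c<..}|lborel. z x) = 0"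
  shows "AE x in lborel. z x = 0"
proof -
  have [measurable]: "z \<in> borel_measurable borel" using z by auto
  have ip: "integrable lborel (\<lambda>x. max 0 (z x))"
    by (rule Bochner_Integration.integrable_max[OF _ z]) simp
  have im: "integrable lborel (\<lambda>x. max 0 (- z x))"
    by (rule Bochner_Integration.integrable_max[OF _ integrable_minus[OF z]]) simp
  have pos_neg_eq: "(\<integral>x. max 0 (z x) * indicator {c<..} x \<partial>lborel)
      = (\<integral>x. max 0 (- z x) * indicator {c<..} x \<partial>lborel)" for c
  proof -
    have "(\<integral>x. max 0 (z x) * indicator {c<..} x \<partial>lborel) - (\<integral>x. max 0 (- z x) * indicator {c<..} x \<partial>lborel)
        = (\<integral>x. max 0 (z x) * indicator {c<..} x - max 0 (- z x) * indicator {c<..} x \<partial>lborel)"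
      using ip im by (intro Bochner_Integration.integral_diff[symmetric] integrable_real_mult_indicator) auto
    also have "\<dots> = (LINT x:{c<..}|lborel. z x)"
      unfolding set_lebesgue_integral_def
      by (intro Bochner_Integration.integral_cong) (auto simp: max_def split: split_indicator)
    finally show ?thesis using zi by simp
  qed
  \<comment> \<open>the positive and negative parts of z define measures that agree on all half-lines\<close>
  have "density lborel (\<lambda>x. ennreal (max 0 (z x))) = density lborel (\<lambda>x. ennreal (max 0 (- z x)))"
  proof (rule measure_eqI_lessThan)
    fix c :: real
    have e1: "emeasure (density lborel (\<lambda>x. ennreal (max 0 (z x)))) {c<..}
        = ennreal (\<integral>x. max 0 (z x) * indicator {c<..} x \<partial>lborel)"
      by (simp add: emeasure_density nn_integral_eq_integral[symmetric] integrable_real_mult_indicator[OF _ ip]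
          ennreal_mult' ennreal_indicator)
    have e2: "emeasure (density lborel (\<lambda>x. ennreal (max 0 (- z x)))) {c<..}
        = ennreal (\<integral>x. max 0 (- z x) * indicator {c<..} x \<partial>lborel)"
      by (simp add: emeasure_density nn_integral_eq_integral[symmetric] integrable_real_mult_indicator[OF _ im]
          ennreal_mult' ennreal_indicator)
    show "emeasure (density lborel (\<lambda>x. ennreal (max 0 (z x)))) {c<..} < \<infinity>"
      unfolding e1 by simp
    show "emeasure (density lborel (\<lambda>x. ennreal (max 0 (z x)))) {c<..} =
          emeasure (density lborel (\<lambda>x. ennreal (max 0 (- z x)))) {c<..}"
      unfolding e1 e2 pos_neg_eq ..
  qed simp_all
  then have "AE x in lborel. ennreal (max 0 (z x)) = ennreal (max 0 (- z x))"
    by (subst (asm) sigma_finite_measure.density_unique_iff[OF sigma_finite_lborel]) auto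
  then show ?thesis
    by (rule AE_mp) (auto simp: max_def split: if_splits)
qed

lemma AE_zero_if_interval_integrals_zero:
  fixes z :: "real \<Rightarrow> real"
  assumes si: "\<And>a b. a \<le> b \<Longrightarrow> set_integrable lborel {a..b} z"
      and zi: "\<And>a b. a \<le> b \<Longrightarrow> (LINT x:{a..b}|lborel. z x) = 0"
  shows "AE x in lborel. z x = 0"
proof -
  have local_zero: "AE x in lborel. x \<in> {-n..n} \<longrightarrow> z x = 0" if n: "0 \<le> n" for n :: real
  proof -
    define zn where "zn = (\<lambda>x. indicator {-n..n} x * z x)"
    have "integrable lborel zn"
      using si[of "-n" n] n unfolding zn_def set_integrable_def by simp
    moreover have "(LINT x:{c<..}|lborel. zn x) = 0" for c
    proof -
      have "(LINT x:{c<..}|lborel. zn x) = (LINT x:({c<..} \<inter> {-n..n})|lborel. z x)"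
        unfolding set_lebesgue_integral_def zn_def
        by (intro Bochner_Integration.integral_cong) (auto split: split_indicator)
      also have "\<dots> = 0"
      proof (cases "c < n")
        case True
        define p where "p = max c (-n)"
        have pn: "p \<le> n" using True n unfolding p_def by auto
        have "(LINT x:({c<..} \<inter> {-n..n})|lborel. z x) = (LINT x:{p..n}|lborel. z x)"
        proof (rule set_integral_cong_set)
          show "set_borel_measurable lborel {p..n} z"
            using si[OF pn] unfolding set_integrable_def set_borel_measurable_def by auto
          have "set_integrable lborel ({c<..} \<inter> {-n..n}) z"
            by (rule set_integrable_subset[OF si[of "-n" n]]) (use n in auto)
          then show "set_borel_measurable lborel ({c<..} \<inter> {-n..n}) z"
            unfolding set_integrable_def set_borel_measurable_def by auto
          show "AE x in lborel. (x \<in> {p..n}) = (x \<in> {c<..} \<inter> {-n..n})"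
            using AE_lborel_singleton[of p] by eventually_elim (auto simp: p_def)
        qed
        then show ?thesis using zi[OF pn] by simp
      qed (simp add: set_lebesgue_integral_def)
      finally show ?thesis .
    qed
    ultimately have "AE x in lborel. zn x = 0"
      by (rule AE_zero_if_integrals_greaterThan_zero)
    then show ?thesis
      by (rule AE_mp, intro AE_I2) (auto simp: zn_def)
  qed
  have "AE x in lborel. \<forall>n::nat. x \<in> {-real n..real n} \<longrightarrow> z x = 0"
    by (subst AE_all_countable) (intro allI local_zero; simp)
  then show ?thesis
  proof (rule AE_mp, intro AE_I2 impI)
    fix x assume "\<forall>n::nat. x \<in> {-real n..real n} \<longrightarrow> z x = 0"
    moreover obtain n :: nat where "\<bar>x\<bar> \<le> real n" using real_arch_simple by blast
    ultimately show "z x = 0" by (auto simp: abs_le_iff)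
  qed
qed

lemma ac_deriv_unique_AE:
  assumes "ac_deriv F g1" "ac_deriv F g2"
  shows "AE x in lborel. g1 x = g2 x"
proof -
  have d: "ac_deriv (\<lambda>x. F x - F x) (\<lambda>x. g1 x - g2 x)" by (rule ac_deriv_diff[OF assms])
  have "AE x in lborel. g1 x - g2 x = 0"
    by (rule AE_zero_if_interval_integrals_zero) (use ac_derivD[OF d] in simp_all)
  then show ?thesis by auto
qed

lemma ac_deriv_unique_continuous:
  assumes "ac_deriv F g1" "ac_deriv F g2" "continuous_on UNIV g1" "continuous_on UNIV g2"
  shows "g1 = g2"
proof -
  define S where "S = {x. g1 x \<noteq> g2 x}"
  have "open S" unfolding S_def
    using assms(3,4) by (intro open_Collect_neq) auto
  moreover have "AE x in lborel. x \<notin> S"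
    using ac_deriv_unique_AE[OF assms(1,2)] unfolding S_def by simp
  ultimately have "negligible S"
    by (subst (asm) AE_iff_null) (auto simp: negligible_iff_null_sets null_sets_completionI)
  then have "S = {}" using open_not_negligible[OF \<open>open S\<close>] by auto
  then show ?thesis unfolding S_def by auto
qed

lemma ac_deriv_tendsto_at_top:
  assumes "ac_deriv F g" "set_integrable lborel {a..} g"
  shows "(F \<longlongrightarrow> F a + (LINT x:{a..}|lborel. g x)) at_top"
proof -
  have "((\<lambda>b. F a + (LINT x:{a..b}|lborel. g x)) \<longlongrightarrow> F a + (LINT x:{a..}|lborel. g x)) at_top"
    by (intro tendsto_add tendsto_const tendsto_set_lebesgue_integral_at_top assms(2)) auto
  moreover have "eventually (\<lambda>b. F a + (LINT x:{a..b}|lborel. g x) = F b) at_top"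
    using eventually_ge_at_top[of a]
  proof eventually_elim
    case (elim b)
    then show ?case using ac_derivD(2)[OF assms(1) elim] by simp
  qed
  ultimately show ?thesis by (rule Lim_transform_eventually)
qed

lemma ac_deriv_tendsto_at_bot:
  assumes "ac_deriv F g" "set_integrable lborel {..b} g"
  shows "(F \<longlongrightarrow> F b - (LINT x:{..b}|lborel. g x)) at_bot"
proof -
  have "((\<lambda>a. F b - (LINT x:{a..b}|lborel. g x)) \<longlongrightarrow> F b - (LINT x:{..b}|lborel. g x)) at_bot"
    by (intro tendsto_diff tendsto_const tendsto_set_lebesgue_integral_at_bot assms(2)) auto
  moreover have "eventually (\<lambda>a. F b - (LINT x:{a..b}|lborel. g x) = F a) at_bot"
    using eventually_le_at_bot[of b]
  proof eventually_elim
    case (elim a)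
    then show ?case using ac_derivD(2)[OF assms(1) elim] by simp
  qed
  ultimately show ?thesis by (rule Lim_transform_eventually)
qed

lemma emeasure_lborel_atLeast: "emeasure lborel {a::real..} = \<infinity>"
proof -
  have bound: "of_nat n \<le> emeasure lborel {a..}" for n
    using emeasure_mono[of "{a..a + real n}" "{a..}" lborel] by (simp add: ennreal_of_nat_eq_real_of_nat)
  show ?thesis
  proof (rule ccontr)
    assume "emeasure lborel {a..} \<noteq> \<infinity>"
    then obtain n where "emeasure lborel {a..} < of_nat n"
      using ennreal_Ex_less_of_nat by (auto simp: less_top)
    then show False using bound[of n] by simp
  qed
qed

lemma tendsto_at_top_integrable_imp_zero:
  fixes \<phi> :: "real \<Rightarrow> real"
  assumes "integrable lborel \<phi>" "(\<phi> \<longlongrightarrow> l) at_top"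
  shows "l = 0"
proof (rule ccontr)
  assume "l \<noteq> 0"
  define e where "e = \<bar>l\<bar>/2"
  have "0 < e" "e < \<bar>l\<bar>" using \<open>l \<noteq> 0\<close> by (simp_all add: e_def)
  then have "eventually (\<lambda>x. e < \<bar>\<phi> x\<bar>) at_top"
    by (intro order_tendstoD(1)[OF tendsto_rabs[OF assms(2)]])
  then obtain T where T: "\<And>x. x \<ge> T \<Longrightarrow> e < \<bar>\<phi> x\<bar>"
    by (auto simp: eventually_at_top_linorder)
  have "integrable lborel (\<lambda>x. indicator {T..} x * e)"
  proof (rule Bochner_Integration.integrable_bound[OF integrable_norm[OF assms(1)]])
    show "AE x in lborel. norm (indicator {T..} x * e) \<le> norm (norm (\<phi> x))"
      using T \<open>0 < e\<close> by (intro AE_I2) (auto split: split_indicator intro: less_imp_le)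
  qed simp
  then have "integrable lborel (indicator {T..} :: real \<Rightarrow> real)"
    using \<open>0 < e\<close> by simp
  then show False by (simp add: integrable_indicator_iff emeasure_lborel_atLeast)
qed

lemma tendsto_at_bot_integrable_imp_zero:
  fixes \<phi> :: "real \<Rightarrow> real"
  assumes "integrable lborel \<phi>" "(\<phi> \<longlongrightarrow> l) at_bot"
  shows "l = 0"
proof (rule tendsto_at_top_integrable_imp_zero)
  show "integrable lborel (\<lambda>x. \<phi> (-x))"
    using lborel_integrable_real_affine[OF assms(1), of "-1" 0] by simp
  show "((\<lambda>x. \<phi> (-x)) \<longlongrightarrow> l) at_top"
    using assms(2) by (simp add: filterlim_at_bot_mirror)
qed

lemma integral_ac_deriv_eq_0:
  assumes d: "ac_deriv \<phi> \<rho>" and ir: "integrable lborel \<rho>" and ip: "integrable lborel \<phi>"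
  shows "(\<integral>x. \<rho> x \<partial>lborel) = 0"
proof -
  have r1: "set_integrable lborel {0..} \<rho>" and r2: "set_integrable lborel {..0} \<rho>"
    unfolding set_integrable_def using integrable_mult_indicator[OF _ ir] by auto
  have "\<phi> 0 + (LINT x:{0..}|lborel. \<rho> x) = 0"
    by (rule tendsto_at_top_integrable_imp_zero[OF ip ac_deriv_tendsto_at_top[OF d r1]])
  moreover have "\<phi> 0 - (LINT x:{..0}|lborel. \<rho> x) = 0"
    by (rule tendsto_at_bot_integrable_imp_zero[OF ip ac_deriv_tendsto_at_bot[OF d r2]])
  moreover have "(LINT x:({..0} \<union> {0..})|lborel. \<rho> x) = (LINT x:{..0}|lborel. \<rho> x) + (LINT x:{0..}|lborel. \<rho> x)"
    by (rule set_integral_Un_AE[OF _ _ _ r2 r1]) (auto intro: AE_mp[OF AE_lborel_singleton[of 0]])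
  moreover have "{..0} \<union> {0..} = (UNIV :: real set)" by auto
  ultimately show ?thesis by (simp add: set_lebesgue_integral_def)
qed

lemma ac_deriv_set_integral_atMost:
  fixes f :: "real \<Rightarrow> real"
  assumes si: "\<And>x. set_integrable lborel {..x} f"
  shows "ac_deriv (\<lambda>x. LINT y:{..x}|lborel. f y) f"
  unfolding ac_deriv_def
proof (intro allI impI conjI)
  fix a b :: real assume ab: "a \<le> b"
  show sab: "set_integrable lborel {a..b} f" by (rule set_integrable_subset[OF si[of b]]) auto
  have s2: "set_integrable lborel {a<..b} f" by (rule set_integrable_subset[OF si[of b]]) auto
  have "{..b} = {..a} \<union> {a<..b}" using ab by auto
  then have "(LINT y:{..b}|lborel. f y) = (LINT y:({..a} \<union> {a<..b})|lborel. f y)"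
    by simp
  also have "\<dots> = (LINT y:{..a}|lborel. f y) + (LINT y:{a<..b}|lborel. f y)"
    by (rule set_integral_Un[OF _ si s2]) auto
  also have "(LINT y:{a<..b}|lborel. f y) = (LINT y:{a..b}|lborel. f y)"
  proof (rule set_integral_cong_set)
    show "set_borel_measurable lborel {a..b} f" "set_borel_measurable lborel {a<..b} f"
      using sab s2 unfolding set_integrable_def set_borel_measurable_def by auto
    show "AE x in lborel. (x \<in> {a..b}) = (x \<in> {a<..b})"
      using AE_lborel_singleton[of a] by eventually_elim (use ab in auto)
  qed
  finally show "(LINT y:{..b}|lborel. f y) - (LINT y:{..a}|lborel. f y) = (LINT y:{a..b}|lborel. f y)"
    by simp
qed

lemma ac_deriv_set_integral_atLeast:
  fixes f :: "real \<Rightarrow> real"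
  assumes si: "\<And>x. set_integrable lborel {x..} f"
  shows "ac_deriv (\<lambda>x. LINT y:{x..}|lborel. f y) (\<lambda>x. - f x)"
  unfolding ac_deriv_def
proof (intro allI impI conjI)
  fix a b :: real assume ab: "a \<le> b"
  have sab: "set_integrable lborel {a..b} f" by (rule set_integrable_subset[OF si[of a]]) auto
  then show "set_integrable lborel {a..b} (\<lambda>x. - f x)" by (simp add: set_integrable_def)
  have s2: "set_integrable lborel {a..<b} f" by (rule set_integrable_subset[OF si[of a]]) auto
  have "{a..} = {a..<b} \<union> {b..}" using ab by auto
  then have "(LINT y:{a..}|lborel. f y) = (LINT y:({a..<b} \<union> {b..})|lborel. f y)"
    by simp
  also have "\<dots> = (LINT y:{a..<b}|lborel. f y) + (LINT y:{b..}|lborel. f y)"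
    by (rule set_integral_Un[OF _ s2 si]) auto
  also have "(LINT y:{a..<b}|lborel. f y) = (LINT y:{a..b}|lborel. f y)"
  proof (rule set_integral_cong_set)
    show "set_borel_measurable lborel {a..b} f" "set_borel_measurable lborel {a..<b} f"
      using sab s2 unfolding set_integrable_def set_borel_measurable_def by auto
    show "AE x in lborel. (x \<in> {a..b}) = (x \<in> {a..<b})"
      using AE_lborel_singleton[of b] by eventually_elim (use ab in auto)
  qed
  finally show "(LINT y:{b..}|lborel. f y) - (LINT y:{a..}|lborel. f y) = (LINT y:{a..b}|lborel. - f y)"
    by (simp add: set_lebesgue_integral_def)
qed

section \<open>Square-integrable functions and the Schur test\<close>

definition square_integrable :: "(real \<Rightarrow> real) \<Rightarrow> bool" where
  "square_integrable f \<longleftrightarrow> f \<in> borel_measurable borel \<and> integrable lborel (\<lambda>x. (f x)\<^sup>2)"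

lemma integrable_mult_if_square_integrable:
  assumes "square_integrable f" "square_integrable g"
  shows "integrable lborel (\<lambda>x. f x * g x)"
proof (rule Bochner_Integration.integrable_bound[where f="\<lambda>x. ((f x)\<^sup>2 + (g x)\<^sup>2) / 2"])
  show "integrable lborel (\<lambda>x. ((f x)\<^sup>2 + (g x)\<^sup>2) / 2)"
    using assms by (simp add: square_integrable_def)
  show "(\<lambda>x. f x * g x) \<in> borel_measurable lborel"
    using assms by (auto simp: square_integrable_def)
  have "\<bar>f x * g x\<bar> \<le> ((f x)\<^sup>2 + (g x)\<^sup>2) / 2" for x
    using sum_squares_bound[of "\<bar>f x\<bar>" "\<bar>g x\<bar>"] by (simp add: abs_mult field_simps)
  then show "AE x in lborel. norm (f x * g x) \<le> norm (((f x)\<^sup>2 + (g x)\<^sup>2) / 2)"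
    by (intro AE_I2) simp
qed

lemma square_integrable_add:
  assumes "square_integrable f" "square_integrable g"
  shows "square_integrable (\<lambda>x. f x + g x)"
proof -
  have "(\<lambda>x. (f x + g x)\<^sup>2) = (\<lambda>x. (f x)\<^sup>2 + 2 * (f x * g x) + (g x)\<^sup>2)"
    by (auto simp: power2_sum)
  then show ?thesis
    using assms integrable_mult_if_square_integrable[OF assms] by (auto simp: square_integrable_def)
qed

lemma square_integrable_cmult:
  "square_integrable f \<Longrightarrow> square_integrable (\<lambda>x. c * f x)"
  by (auto simp: square_integrable_def power_mult_distrib)

lemma square_integrable_diff:
  "square_integrable f \<Longrightarrow> square_integrable g \<Longrightarrow> square_integrable (\<lambda>x. f x - g x)"
  using square_integrable_add[of f "\<lambda>x. -1 * g x"] square_integrable_cmult[of g "-1"] by simp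

lemma nn_integral_exp_atLeast:
  fixes c a :: real assumes c: "c > 0"
  shows "(\<integral>\<^sup>+x. ennreal (exp (-c*x)) * indicator {a..} x \<partial>lborel) = ennreal (exp (-c*a) / c)"
proof -
  have "(\<integral>\<^sup>+x. ennreal (exp (-c*x)) * indicator {a..} x \<partial>lborel) = 0 - (- exp (-c*a) / c)"
  proof (rule nn_integral_FTC_atLeast)
    show "DERIV (\<lambda>x. - exp (-c*x) / c) x :> exp (-c*x)" for x
      using c by (auto intro!: derivative_eq_intros)
    show "((\<lambda>x. - exp (-c*x) / c) \<longlongrightarrow> 0) at_top"
      using c by real_asymp
  qed auto
  then show ?thesis by simp
qed

lemma nn_integral_exp_atMost:
  fixes c a :: real assumes c: "c > 0"
  shows "(\<integral>\<^sup>+x. ennreal (exp (c*x)) * indicator {..a} x \<partial>lborel) = ennreal (exp (c*a) / c)"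
proof -
  have "(\<lambda>x. ennreal (exp (c*x)) * indicator {..a} x) \<in> borel_measurable borel" by measurable
  from nn_integral_real_affine[OF this, of "-1" 0]
  have "(\<integral>\<^sup>+x. ennreal (exp (c*x)) * indicator {..a} x \<partial>lborel)
      = (\<integral>\<^sup>+x. ennreal (exp (c*(0 + (-1)*x))) * indicator {..a} (0 + (-1)*x) \<partial>lborel)"
    by simp
  also have "\<dots> = (\<integral>\<^sup>+x. ennreal (exp (-c*x)) * indicator {-a..} x \<partial>lborel)"
    by (intro nn_integral_cong) (auto split: split_indicator)
  also have "\<dots> = ennreal (exp (c*a) / c)" using nn_integral_exp_atLeast[OF c, of "-a"] by simp
  finally show ?thesis .
qed

lemma square_integrable_exp_atLeast:
  fixes c a :: real assumes c: "c > 0"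
  shows "square_integrable (\<lambda>x. indicator {a..} x * exp (-c*x))"
proof -
  have "(\<integral>\<^sup>+x. ennreal ((indicator {a..} x * exp (-c*x))\<^sup>2) \<partial>lborel) = ennreal (exp (-(2*c)*a) / (2*c))"
    using nn_integral_exp_atLeast[of "2*c" a] c
    by (subst nn_integral_cong[where v="\<lambda>x. ennreal (exp (-(2*c)*x)) * indicator {a..} x"])
       (auto simp: power_mult_distrib power2_eq_square split: split_indicator simp flip: exp_add)
  then show ?thesis
    unfolding square_integrable_def by (auto intro: integrableI_nn_integral_finite)
qed

lemma square_integrable_exp_atMost:
  fixes c a :: real assumes c: "c > 0"
  shows "square_integrable (\<lambda>x. indicator {..a} x * exp (c*x))"
proof -
  have "(\<integral>\<^sup>+x. ennreal ((indicator {..a} x * exp (c*x))\<^sup>2) \<partial>lborel) = ennreal (exp ((2*c)*a) / (2*c))"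
    using nn_integral_exp_atMost[of "2*c" a] c
    by (subst nn_integral_cong[where v="\<lambda>x. ennreal (exp ((2*c)*x)) * indicator {..a} x"])
       (auto simp: power_mult_distrib power2_eq_square split: split_indicator simp flip: exp_add)
  then show ?thesis
    unfolding square_integrable_def by (auto intro: integrableI_nn_integral_finite)
qed

lemma set_integrable_exp_mult_atLeast:
  assumes "c > 0" "square_integrable \<psi>"
  shows "set_integrable lborel {a..} (\<lambda>y. exp (-c*y) * \<psi> y)"
  using integrable_mult_if_square_integrable[OF square_integrable_exp_atLeast[OF assms(1)] assms(2)]
  by (simp add: set_integrable_def mult.assoc)

lemma set_integrable_exp_mult_atMost:
  assumes "c > 0" "square_integrable \<psi>"
  shows "set_integrable lborel {..a} (\<lambda>y. exp (c*y) * \<psi> y)"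
  using integrable_mult_if_square_integrable[OF square_integrable_exp_atMost[OF assms(1)] assms(2)]
  by (simp add: set_integrable_def mult.assoc)

lemma square_integral_le_kernel_mass:
  fixes k \<psi> :: "real \<Rightarrow> real"
  assumes [measurable]: "k \<in> borel_measurable borel" "\<psi> \<in> borel_measurable borel"
    and k0: "\<And>y. 0 \<le> k y"
  shows "ennreal ((\<integral>y. k y * \<psi> y \<partial>lborel)\<^sup>2)
    \<le> (\<integral>\<^sup>+y. ennreal (k y) \<partial>lborel) * (\<integral>\<^sup>+y. ennreal (k y * (\<psi> y)\<^sup>2) \<partial>lborel)"
proof -
  define T where "T = (\<integral>y. k y * \<psi> y \<partial>lborel)"
  have norm_le: "ennreal \<bar>T\<bar> \<le> (\<integral>\<^sup>+y. ennreal (k y * \<bar>\<psi> y\<bar>) \<partial>lborel)"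
  proof (cases "integrable lborel (\<lambda>y. k y * \<psi> y)")
    case True
    have "ennreal \<bar>T\<bar> \<le> (\<integral>\<^sup>+y. norm (k y * \<psi> y) \<partial>lborel)"
      unfolding T_def using integral_norm_bound_ennreal[OF True] by simp
    also have "\<dots> = (\<integral>\<^sup>+y. ennreal (k y * \<bar>\<psi> y\<bar>) \<partial>lborel)"
      using k0 by (intro nn_integral_cong) (simp add: abs_mult)
    finally show ?thesis .
  next
    case False
    then show ?thesis by (simp add: T_def not_integrable_integral_eq)
  qed
  have sqrt_sq: "(ennreal (sqrt (k y)))\<^sup>2 = ennreal (k y)"
    "(ennreal (sqrt (k y) * \<bar>\<psi> y\<bar>))\<^sup>2 = ennreal (k y * (\<psi> y)\<^sup>2)" for y
    using ennreal_power[of "sqrt (k y)" 2] ennreal_power[of "sqrt (k y) * \<bar>\<psi> y\<bar>" 2] k0[of y]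
    by (simp_all add: power_mult_distrib)
  have "(\<integral>\<^sup>+y. ennreal (k y * \<bar>\<psi> y\<bar>) \<partial>lborel)
      = (\<integral>\<^sup>+y. ennreal (sqrt (k y)) * ennreal (sqrt (k y) * \<bar>\<psi> y\<bar>) \<partial>lborel)"
    using k0 by (intro nn_integral_cong) (simp add: ennreal_mult[symmetric] mult.assoc[symmetric])
  also have "(\<dots>)\<^sup>2 \<le> (\<integral>\<^sup>+y. (ennreal (sqrt (k y)))\<^sup>2 \<partial>lborel)
      * (\<integral>\<^sup>+y. (ennreal (sqrt (k y) * \<bar>\<psi> y\<bar>))\<^sup>2 \<partial>lborel)"
    by (rule Cauchy_Schwarz_nn_integral) measurable
  also have "\<dots> = (\<integral>\<^sup>+y. ennreal (k y) \<partial>lborel) * (\<integral>\<^sup>+y. ennreal (k y * (\<psi> y)\<^sup>2) \<partial>lborel)"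
    by (simp add: sqrt_sq)
  finally have cs: "(\<integral>\<^sup>+y. ennreal (k y * \<bar>\<psi> y\<bar>) \<partial>lborel)\<^sup>2
      \<le> (\<integral>\<^sup>+y. ennreal (k y) \<partial>lborel) * (\<integral>\<^sup>+y. ennreal (k y * (\<psi> y)\<^sup>2) \<partial>lborel)" .
  have "ennreal (T\<^sup>2) = (ennreal \<bar>T\<bar>)\<^sup>2" by (simp add: ennreal_power)
  also have "\<dots> \<le> (\<integral>\<^sup>+y. ennreal (k y * \<bar>\<psi> y\<bar>) \<partial>lborel)\<^sup>2"
    using norm_le by (simp add: power2_eq_square mult_mono)
  finally show ?thesis using cs unfolding T_def by (rule order_trans)
qed

lemma schur_test:
  fixes K :: "real \<Rightarrow> real \<Rightarrow> real"
  assumes Km: "(\<lambda>(x,y). K x y) \<in> borel_measurable (lborel \<Otimes>\<^sub>M lborel)"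
    and K0: "\<And>x y. 0 \<le> K x y"
    and Kx: "\<And>x. (\<integral>\<^sup>+y. ennreal (K x y) \<partial>lborel) \<le> ennreal C"
    and Ky: "\<And>y. (\<integral>\<^sup>+x. ennreal (K x y) \<partial>lborel) \<le> ennreal C"
    and \<psi>: "square_integrable \<psi>"
  shows "square_integrable (\<lambda>x. \<integral>y. K x y * \<psi> y \<partial>lborel)"
proof -
  define T where "T = (\<lambda>x. \<integral>y. K x y * \<psi> y \<partial>lborel)"
  have [measurable]: "\<psi> \<in> borel_measurable borel" and \<psi>2: "integrable lborel (\<lambda>y. (\<psi> y)\<^sup>2)"
    using \<psi> by (auto simp: square_integrable_def)
  have Km'[measurable]: "(\<lambda>p. K (fst p) (snd p)) \<in> borel_measurable (lborel \<Otimes>\<^sub>M lborel)"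
    using Km by (simp add: case_prod_beta')
  have Kxm[measurable]: "K x \<in> borel_measurable borel" for x
    using measurable_Pair2[OF Km', of x] by simp
  have Kym[measurable]: "(\<lambda>x. K x y) \<in> borel_measurable lborel" for y
    using measurable_Pair1[OF Km', of y] by simp
  have Tm[measurable]: "T \<in> borel_measurable lborel"
    unfolding T_def by (rule lborel.borel_measurable_lebesgue_integral) measurable
  have Kpsi[measurable]: "(\<lambda>(x,y). ennreal (K x y * (\<psi> y)\<^sup>2)) \<in> borel_measurable (lborel \<Otimes>\<^sub>M lborel)"
    by measurable
  have "ennreal ((T x)\<^sup>2) \<le> ennreal C * (\<integral>\<^sup>+y. ennreal (K x y * (\<psi> y)\<^sup>2) \<partial>lborel)" for x
  proof -
    have "ennreal ((T x)\<^sup>2)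
        \<le> (\<integral>\<^sup>+y. ennreal (K x y) \<partial>lborel) * (\<integral>\<^sup>+y. ennreal (K x y * (\<psi> y)\<^sup>2) \<partial>lborel)"
      unfolding T_def by (rule square_integral_le_kernel_mass) (simp_all add: K0)
    also have "\<dots> \<le> ennreal C * (\<integral>\<^sup>+y. ennreal (K x y * (\<psi> y)\<^sup>2) \<partial>lborel)"
      by (intro mult_right_mono Kx) simp
    finally show ?thesis .
  qed
  then have "(\<integral>\<^sup>+x. ennreal ((T x)\<^sup>2) \<partial>lborel)
      \<le> (\<integral>\<^sup>+x. ennreal C * (\<integral>\<^sup>+y. ennreal (K x y * (\<psi> y)\<^sup>2) \<partial>lborel) \<partial>lborel)"
    by (intro nn_integral_mono)
  also have "\<dots> = ennreal C * (\<integral>\<^sup>+x. (\<integral>\<^sup>+y. ennreal (K x y * (\<psi> y)\<^sup>2) \<partial>lborel) \<partial>lborel)"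
    by (rule nn_integral_cmult) (rule lborel.borel_measurable_nn_integral[OF Kpsi])
  also have "(\<integral>\<^sup>+x. (\<integral>\<^sup>+y. ennreal (K x y * (\<psi> y)\<^sup>2) \<partial>lborel) \<partial>lborel)
      = (\<integral>\<^sup>+y. (\<integral>\<^sup>+x. ennreal (K x y * (\<psi> y)\<^sup>2) \<partial>lborel) \<partial>lborel)"
    by (rule lborel_pair.Fubini'[symmetric, OF Kpsi])
  also have "\<dots> \<le> (\<integral>\<^sup>+y. ennreal C * ennreal ((\<psi> y)\<^sup>2) \<partial>lborel)"
  proof (intro nn_integral_mono)
    fix y
    have "(\<integral>\<^sup>+x. ennreal (K x y * (\<psi> y)\<^sup>2) \<partial>lborel) = (\<integral>\<^sup>+x. ennreal (K x y) \<partial>lborel) * ennreal ((\<psi> y)\<^sup>2)"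
      using K0 by (simp add: ennreal_mult nn_integral_multc)
    also have "\<dots> \<le> ennreal C * ennreal ((\<psi> y)\<^sup>2)"
      by (intro mult_right_mono Ky) simp
    finally show "(\<integral>\<^sup>+x. ennreal (K x y * (\<psi> y)\<^sup>2) \<partial>lborel) \<le> ennreal C * ennreal ((\<psi> y)\<^sup>2)" .
  qed
  also have "\<dots> = ennreal C * ennreal (\<integral>y. (\<psi> y)\<^sup>2 \<partial>lborel)"
    using nn_integral_eq_integral[OF \<psi>2] by (simp add: nn_integral_cmult)
  finally have "(\<integral>\<^sup>+x. ennreal ((T x)\<^sup>2) \<partial>lborel) \<le> ennreal C * (ennreal C * ennreal (\<integral>y. (\<psi> y)\<^sup>2 \<partial>lborel))"
    by (simp add: mult_left_mono)
  then have "(\<integral>\<^sup>+x. ennreal ((T x)\<^sup>2) \<partial>lborel) < \<infinity>"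
    by (rule le_less_trans) (simp add: ennreal_mult_less_top)
  then have "integrable lborel (\<lambda>x. (T x)\<^sup>2)"
    by (intro integrableI_bounded) auto
  then show ?thesis by (simp add: square_integrable_def T_def[symmetric])
qed

definition exp_kernel :: "real \<Rightarrow> real \<Rightarrow> real \<Rightarrow> real" where
  "exp_kernel \<alpha> x y = indicator {..x} y * exp (-\<alpha> * (x - y))"

lemma nn_integral_exp_kernel_row:
  assumes "\<alpha> > 0"
  shows "(\<integral>\<^sup>+y. ennreal (exp_kernel \<alpha> x y) \<partial>lborel) = ennreal (1/\<alpha>)"
proof -
  have "(\<integral>\<^sup>+y. ennreal (exp_kernel \<alpha> x y) \<partial>lborel)
      = (\<integral>\<^sup>+y. ennreal (exp (-\<alpha>*x)) * (ennreal (exp (\<alpha>*y)) * indicator {..x} y) \<partial>lborel)"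
    unfolding exp_kernel_def
    by (intro nn_integral_cong) (simp add: algebra_simps ennreal_mult[symmetric] split: split_indicator flip: exp_add)
  also have "\<dots> = ennreal (exp (-\<alpha>*x)) * ennreal (exp (\<alpha>*x) / \<alpha>)"
    using nn_integral_exp_atMost[OF assms] by (simp add: nn_integral_cmult)
  also have "\<dots> = ennreal (1/\<alpha>)"
    using assms by (simp add: ennreal_mult[symmetric] exp_minus field_simps)
  finally show ?thesis .
qed

lemma nn_integral_exp_kernel_column:
  assumes "\<alpha> > 0"
  shows "(\<integral>\<^sup>+x. ennreal (exp_kernel \<alpha> x y) \<partial>lborel) = ennreal (1/\<alpha>)"
proof -
  have "(\<integral>\<^sup>+x. ennreal (exp_kernel \<alpha> x y) \<partial>lborel)
      = (\<integral>\<^sup>+x. ennreal (exp (\<alpha>*y)) * (ennreal (exp (-\<alpha>*x)) * indicator {y..} x) \<partial>lborel)"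
    unfolding exp_kernel_def
    by (intro nn_integral_cong) (simp add: algebra_simps ennreal_mult[symmetric] split: split_indicator flip: exp_add)
  also have "\<dots> = ennreal (exp (\<alpha>*y)) * ennreal (exp (-\<alpha>*y) / \<alpha>)"
    using nn_integral_exp_atLeast[OF assms] by (simp add: nn_integral_cmult)
  also have "\<dots> = ennreal (1/\<alpha>)"
    using assms by (simp add: ennreal_mult[symmetric] exp_minus field_simps)
  finally show ?thesis .
qed

lemma square_integrable_exp_kernel:
  assumes "\<alpha> > 0" "square_integrable \<psi>"
  shows "square_integrable (\<lambda>x. \<integral>y. exp_kernel \<alpha> x y * \<psi> y \<partial>lborel)"
    and "square_integrable (\<lambda>x. \<integral>y. exp_kernel \<alpha> y x * \<psi> y \<partial>lborel)"
proof -
  have m: "(\<lambda>(x,y). exp_kernel \<alpha> x y) \<in> borel_measurable (lborel \<Otimes>\<^sub>M lborel)"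
    and m': "(\<lambda>(x,y). exp_kernel \<alpha> y x) \<in> borel_measurable (lborel \<Otimes>\<^sub>M lborel)"
    unfolding exp_kernel_def indicator_def atMost_iff by measurable
  have nonneg: "0 \<le> exp_kernel \<alpha> x y" for x y
    by (simp add: exp_kernel_def)
  note row = nn_integral_exp_kernel_row[OF assms(1)] and col = nn_integral_exp_kernel_column[OF assms(1)]
  show "square_integrable (\<lambda>x. \<integral>y. exp_kernel \<alpha> x y * \<psi> y \<partial>lborel)"
    by (rule schur_test[OF m nonneg _ _ assms(2), where C="1/\<alpha>"]) (simp_all add: row col)
  show "square_integrable (\<lambda>x. \<integral>y. exp_kernel \<alpha> y x * \<psi> y \<partial>lborel)"
    by (rule schur_test[OF m' nonneg _ _ assms(2), where C="1/\<alpha>"]) (simp_all add: row col)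
qed

section \<open>The weighted space and one-sided exponential convolutions\<close>

lemma L2w_iff_square_integrable: "L2w w g \<longleftrightarrow> square_integrable (\<lambda>x. g x * exp (w * x / 2))"
proof -
  have sq: "(g x * exp (w * x / 2))\<^sup>2 = (g x)\<^sup>2 * exp (w * x)" for x
    by (simp add: power_mult_distrib power2_eq_square flip: exp_add)
  have "g \<in> borel_measurable borel \<longleftrightarrow> (\<lambda>x. g x * exp (w * x / 2)) \<in> borel_measurable borel"
  proof
    assume [measurable]: "g \<in> borel_measurable borel"
    show "(\<lambda>x. g x * exp (w * x / 2)) \<in> borel_measurable borel" by measurable
  next
    assume m: "(\<lambda>x. g x * exp (w * x / 2)) \<in> borel_measurable borel"
    have "(\<lambda>x. exp (- (w * x / 2))) \<in> borel_measurable borel" by measurable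
    from borel_measurable_times[OF m this]
    show "g \<in> borel_measurable borel" by (simp add: mult.assoc flip: exp_add)
  qed
  then show ?thesis
    by (simp add: L2w_def square_integrable_def sq)
qed

lemma L2w_add: "L2w w f \<Longrightarrow> L2w w g \<Longrightarrow> L2w w (\<lambda>x. f x + g x)"
  using square_integrable_add by (simp add: L2w_iff_square_integrable distrib_right)

lemma L2w_diff: "L2w w f \<Longrightarrow> L2w w g \<Longrightarrow> L2w w (\<lambda>x. f x - g x)"
  using square_integrable_diff by (simp add: L2w_iff_square_integrable left_diff_distrib)

lemma L2w_cmult: "L2w w f \<Longrightarrow> L2w w (\<lambda>x. c * f x)"
  using square_integrable_cmult by (simp add: L2w_iff_square_integrable mult.assoc)

lemma integrable_L2w_mult:
  assumes "L2w w f" "L2w w g"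
  shows "integrable lborel (\<lambda>x. f x * g x * exp (w * x))"
proof -
  have "exp (w * x / 2) * exp (w * x / 2) = exp (w * x)" for x
    by (simp flip: exp_add)
  then have "(\<lambda>x. f x * g x * exp (w * x)) = (\<lambda>x. (f x * exp (w * x / 2)) * (g x * exp (w * x / 2)))"
    by (intro ext) (metis mult.assoc mult.left_commute)
  then show ?thesis
    using integrable_mult_if_square_integrable assms by (simp add: L2w_iff_square_integrable)
qed

lemma set_integrable_L2w_exp_atMost:
  assumes "w/2 < k" "L2w w g"
  shows "set_integrable lborel {..x} (\<lambda>y. exp (k*y) * g y)"
proof -
  have "(k - w/2)*y + w * y / 2 = k*y" for y
    by (simp add: algebra_simps)
  then have "exp ((k - w/2)*y) * exp (w * y / 2) = exp (k*y)" for y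
    by (simp flip: exp_add)
  then have "(\<lambda>y. exp (k*y) * g y) = (\<lambda>y. exp ((k - w/2)*y) * (g y * exp (w * y / 2)))"
    by (intro ext) (metis mult.assoc mult.commute)
  then show ?thesis
    using set_integrable_exp_mult_atMost[of "k - w/2"] assms by (simp add: L2w_iff_square_integrable)
qed

lemma set_integrable_L2w_exp_atLeast:
  assumes "-(w/2) < k" "L2w w g"
  shows "set_integrable lborel {x..} (\<lambda>y. exp (-k*y) * g y)"
proof -
  have "-(k + w/2)*y + w * y / 2 = -k*y" for y
    by (simp add: algebra_simps)
  then have "exp (-(k + w/2)*y) * exp (w * y / 2) = exp (-k*y)" for y
    by (simp flip: exp_add)
  then have "(\<lambda>y. exp (-k*y) * g y) = (\<lambda>y. exp (-(k + w/2)*y) * (g y * exp (w * y / 2)))"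
    by (intro ext) (metis mult.assoc mult.commute)
  then show ?thesis
    using set_integrable_exp_mult_atLeast[of "k + w/2"] assms by (simp add: L2w_iff_square_integrable)
qed

definition exp_conv_below :: "real \<Rightarrow> (real \<Rightarrow> real) \<Rightarrow> real \<Rightarrow> real" where
  "exp_conv_below k g x = exp (-k*x) * (LINT y:{..x}|lborel. exp (k*y) * g y)"

definition exp_conv_above :: "real \<Rightarrow> (real \<Rightarrow> real) \<Rightarrow> real \<Rightarrow> real" where
  "exp_conv_above k g x = exp (k*x) * (LINT y:{x..}|lborel. exp (-k*y) * g y)"

lemma L2w_exp_conv_below:
  assumes "w/2 < k" "L2w w g"
  shows "L2w w (exp_conv_below k g)"
proof -
  define \<alpha> where "\<alpha> = k - w/2"
  define \<psi> where "\<psi> = (\<lambda>y. g y * exp (w * y / 2))"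
  have "exp_conv_below k g x * exp (w * x / 2) = (\<integral>y. exp_kernel \<alpha> x y * \<psi> y \<partial>lborel)" for x
  proof -
    have "exp_conv_below k g x * exp (w * x / 2)
        = exp (-\<alpha>*x) * (\<integral>y. indicator {..x} y *\<^sub>R (exp (k*y) * g y) \<partial>lborel)"
      unfolding exp_conv_below_def set_lebesgue_integral_def \<alpha>_def
      by (simp add: algebra_simps flip: exp_add)
    also have "\<dots> = (\<integral>y. exp (-\<alpha>*x) * (indicator {..x} y *\<^sub>R (exp (k*y) * g y)) \<partial>lborel)"
      by simp
    also have "\<dots> = (\<integral>y. exp_kernel \<alpha> x y * \<psi> y \<partial>lborel)"
    proof (intro Bochner_Integration.integral_cong refl)
      fix y
      have "-\<alpha>*x + k*y = -\<alpha>*(x-y) + w*y/2" by (simp add: \<alpha>_def field_simps)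
      then have "exp (-\<alpha>*x) * exp (k*y) = exp (-\<alpha>*(x-y)) * exp (w*y/2)" by (simp flip: exp_add)
      then show "exp (-\<alpha>*x) * (indicator {..x} y *\<^sub>R (exp (k*y) * g y)) = exp_kernel \<alpha> x y * \<psi> y"
        unfolding exp_kernel_def \<psi>_def by (simp add: mult_ac)
    qed
    finally show ?thesis .
  qed
  moreover have "square_integrable (\<lambda>x. \<integral>y. exp_kernel \<alpha> x y * \<psi> y \<partial>lborel)"
    using assms by (intro square_integrable_exp_kernel) (simp_all add: \<alpha>_def \<psi>_def L2w_iff_square_integrable)
  ultimately show ?thesis
    by (simp add: L2w_iff_square_integrable)
qed

lemma L2w_exp_conv_above:
  assumes "-(w/2) < k" "L2w w g"
  shows "L2w w (exp_conv_above k g)"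
proof -
  define \<alpha> where "\<alpha> = k + w/2"
  define \<psi> where "\<psi> = (\<lambda>y. g y * exp (w * y / 2))"
  have "exp_conv_above k g x * exp (w * x / 2) = (\<integral>y. exp_kernel \<alpha> y x * \<psi> y \<partial>lborel)" for x
  proof -
    have "exp_conv_above k g x * exp (w * x / 2)
        = exp (\<alpha>*x) * (\<integral>y. indicator {x..} y *\<^sub>R (exp (-k*y) * g y) \<partial>lborel)"
      unfolding exp_conv_above_def set_lebesgue_integral_def \<alpha>_def
      by (simp add: algebra_simps flip: exp_add)
    also have "\<dots> = (\<integral>y. exp (\<alpha>*x) * (indicator {x..} y *\<^sub>R (exp (-k*y) * g y)) \<partial>lborel)"
      by simp
    also have "\<dots> = (\<integral>y. exp_kernel \<alpha> y x * \<psi> y \<partial>lborel)"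
    proof (intro Bochner_Integration.integral_cong refl)
      fix y
      have "\<alpha>*x + -k*y = -\<alpha>*(y-x) + w*y/2" by (simp add: \<alpha>_def field_simps)
      then have "exp (\<alpha>*x) * exp (-k*y) = exp (-\<alpha>*(y-x)) * exp (w*y/2)" by (simp flip: exp_add)
      then show "exp (\<alpha>*x) * (indicator {x..} y *\<^sub>R (exp (-k*y) * g y)) = exp_kernel \<alpha> y x * \<psi> y"
        unfolding exp_kernel_def \<psi>_def by (simp add: mult_ac split: split_indicator)
    qed
    finally show ?thesis .
  qed
  moreover have "square_integrable (\<lambda>x. \<integral>y. exp_kernel \<alpha> y x * \<psi> y \<partial>lborel)"
    using assms by (intro square_integrable_exp_kernel) (simp_all add: \<alpha>_def \<psi>_def L2w_iff_square_integrable)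
  ultimately show ?thesis
    by (simp add: L2w_iff_square_integrable)
qed

lemma wderiv_exp_conv_below:
  assumes "w/2 < k" "L2w w g"
  shows "wderiv w (exp_conv_below k g) (\<lambda>x. g x - k * exp_conv_below k g x)"
proof -
  have "ac_deriv (\<lambda>x. LINT y:{..x}|lborel. exp (k*y) * g y) (\<lambda>y. exp (k*y) * g y)"
    using set_integrable_L2w_exp_atMost[OF assms] by (rule ac_deriv_set_integral_atMost)
  from ac_deriv_mult[OF ac_deriv_exp[of "-k"] this]
  have "ac_deriv (exp_conv_below k g) (\<lambda>x. g x - k * exp_conv_below k g x)"
    by (rule ac_deriv_cong) (simp_all add: exp_conv_below_def mult.assoc[symmetric] flip: exp_add)
  moreover have "L2w w (\<lambda>x. g x - k * exp_conv_below k g x)"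
    using assms by (intro L2w_diff L2w_cmult L2w_exp_conv_below)
  ultimately show ?thesis by (simp add: wderiv_iff)
qed

lemma wderiv_exp_conv_above:
  assumes "-(w/2) < k" "L2w w g"
  shows "wderiv w (exp_conv_above k g) (\<lambda>x. k * exp_conv_above k g x - g x)"
proof -
  have "ac_deriv (\<lambda>x. LINT y:{x..}|lborel. exp (-k*y) * g y) (\<lambda>y. - (exp (-k*y) * g y))"
    using set_integrable_L2w_exp_atLeast[OF assms] by (rule ac_deriv_set_integral_atLeast)
  from ac_deriv_mult[OF ac_deriv_exp[of k] this]
  have "ac_deriv (exp_conv_above k g) (\<lambda>x. k * exp_conv_above k g x - g x)"
    by (rule ac_deriv_cong) (simp_all add: exp_conv_above_def mult.assoc[symmetric] flip: exp_add)
  moreover have "L2w w (\<lambda>x. k * exp_conv_above k g x - g x)"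
    using assms by (intro L2w_diff L2w_cmult L2w_exp_conv_above)
  ultimately show ?thesis by (simp add: wderiv_iff)
qed

section \<open>The space H and dissipativity of G\<close>

lemma HspI: "wderiv w f g \<Longrightarrow> f \<in> Hsp w"
  unfolding Hsp_def by auto

lemma wderiv_dH:
  assumes "f \<in> Hsp w"
  shows "wderiv w f (dH w f)"
proof -
  obtain g where "wderiv w f g" using assms by (auto simp: Hsp_def)
  then show ?thesis unfolding dH_def by (rule someI[of "wderiv w f"])
qed

lemma continuous_on_Hsp: "f \<in> Hsp w \<Longrightarrow> continuous_on UNIV f"
  using wderiv_dH by (auto simp: wderiv_iff intro: continuous_on_ac_deriv)

lemma wderiv_convergent_at_top:
  assumes "w > 0" "wderiv w f g"
  shows "\<exists>L. (f \<longlongrightarrow> L) at_top"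
proof -
  have "set_integrable lborel {0..} (\<lambda>y. exp (-0*y) * g y)"
    using assms by (intro set_integrable_L2w_exp_atLeast) (auto simp: wderiv_iff)
  then show ?thesis
    using assms(2) by (auto simp: wderiv_iff intro: ac_deriv_tendsto_at_top)
qed

lemma wderiv_Aop:
  assumes "f \<in> DA w"
  shows "Aop w f \<in> Hsp w \<and> wderiv w f (Aop w f)"
proof -
  obtain h where "h \<in> Hsp w \<and> wderiv w f h" using assms by (auto simp: DA_def)
  then show ?thesis unfolding Aop_def by (rule someI[where P="\<lambda>h. h \<in> Hsp w \<and> wderiv w f h"])
qed

lemma DA_Aop_eqI:
  assumes "wderiv w f u" "u \<in> Hsp w"
  shows "f \<in> DA w \<and> Aop w f = u"
proof
  show f: "f \<in> DA w" using assms by (auto simp: DA_def intro: HspI)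
  show "Aop w f = u"
    using wderiv_Aop[OF f] assms
    by (intro ac_deriv_unique_continuous[of f]) (auto simp: wderiv_iff intro: continuous_on_Hsp)
qed

lemma L2w_tendsto_at_top_eq_0:
  assumes "w > 0" "L2w w b" "(b \<longlongrightarrow> L) at_top"
  shows "L = 0"
proof -
  have [measurable]: "b \<in> borel_measurable borel" using assms(2) by (simp add: L2w_def)
  have "integrable lborel (\<lambda>x. indicator {0..} x * (b x * b x))"
  proof (rule Bochner_Integration.integrable_bound[OF integrable_L2w_mult[OF assms(2,2)]])
    have "indicator {0..} x * \<bar>b x * b x\<bar> \<le> \<bar>b x * b x\<bar> * exp (w * x)" for x
    proof (cases "0 \<le> x")
      case True
      then have "1 \<le> exp (w * x)" using assms(1) by simp
      then show ?thesis using True mult_left_mono[of 1 "exp (w * x)" "\<bar>b x * b x\<bar>"] by simp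
    qed simp
    then show "AE x in lborel. norm (indicator {0..} x * (b x * b x)) \<le> norm (b x * b x * exp (w * x))"
      by (intro AE_I2) (simp add: abs_mult)
  qed simp
  moreover have "((\<lambda>x. indicator {0..} x * (b x * b x)) \<longlongrightarrow> L * L) at_top"
    using tendsto_mult[OF assms(3,3)]
    by (rule Lim_transform_eventually) (auto intro: eventually_mono[OF eventually_ge_at_top[of 0]])
  ultimately have "L * L = 0" by (rule tendsto_at_top_integrable_imp_zero)
  then show ?thesis by simp
qed

lemma integral_by_parts_weighted:
  assumes La: "L2w w a" and ab: "wderiv w a b" and bc: "wderiv w b c"
  shows "(\<integral>x. (c x - w\<^sup>2 / 2 * a x) * a x * exp (w * x) \<partial>lborel) = - (\<integral>x. b x * b x * exp (w * x) \<partial>lborel)"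
proof -
  define E where "E = (\<lambda>x. exp (w * x))"
  have Lb: "L2w w b" and Lc: "L2w w c" and Dab: "ac_deriv a b" and Dbc: "ac_deriv b c"
    using ab bc by (auto simp: wderiv_iff)
  have iaa: "integrable lborel (\<lambda>x. a x * a x * E x)" unfolding E_def by (rule integrable_L2w_mult[OF La La])
  have ica: "integrable lborel (\<lambda>x. c x * a x * E x)" unfolding E_def by (rule integrable_L2w_mult[OF Lc La])
  have ibb: "integrable lborel (\<lambda>x. b x * b x * E x)" unfolding E_def by (rule integrable_L2w_mult[OF Lb Lb])
  have iba: "integrable lborel (\<lambda>x. b x * a x * E x)" unfolding E_def by (rule integrable_L2w_mult[OF Lb La])
  define \<rho> where "\<rho> = (\<lambda>x. c x * a x * E x + b x * b x * E x - w\<^sup>2 / 2 * (a x * a x * E x))"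
  define \<phi> where "\<phi> = (\<lambda>x. b x * (a x * E x) - w / 2 * (a x * (a x * E x)))"
  have DaE: "ac_deriv (\<lambda>x. a x * E x) (\<lambda>x. b x * E x + a x * (w * E x))"
    unfolding E_def by (rule ac_deriv_mult[OF Dab ac_deriv_exp])
  have "ac_deriv \<phi> \<rho>"
    using ac_deriv_diff[OF ac_deriv_mult[OF Dbc DaE] ac_deriv_cmult[OF ac_deriv_mult[OF Dab DaE], of "w/2"]]
    unfolding \<rho>_def \<phi>_def by (rule ac_deriv_cong) (simp_all add: algebra_simps power2_eq_square)
  moreover have "integrable lborel \<rho>" unfolding \<rho>_def using ica ibb iaa by auto
  moreover have "integrable lborel \<phi>" unfolding \<phi>_def using iba iaa
    by (auto simp: mult.assoc mult.left_commute)
  ultimately have "(\<integral>x. \<rho> x \<partial>lborel) = 0" by (rule integral_ac_deriv_eq_0)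
  then have "(\<integral>x. c x * a x * E x \<partial>lborel) + (\<integral>x. b x * b x * E x \<partial>lborel)
      - w\<^sup>2 / 2 * (\<integral>x. a x * a x * E x \<partial>lborel) = 0"
    unfolding \<rho>_def using ica ibb iaa by simp
  moreover have "(\<integral>x. (c x - w\<^sup>2 / 2 * a x) * a x * E x \<partial>lborel)
      = (\<integral>x. c x * a x * E x - w\<^sup>2 / 2 * (a x * a x * E x) \<partial>lborel)"
    by (simp add: algebra_simps)
  moreover have "\<dots> = (\<integral>x. c x * a x * E x \<partial>lborel) - w\<^sup>2 / 2 * (\<integral>x. a x * a x * E x \<partial>lborel)"
    using ica iaa by simp
  ultimately show ?thesis unfolding E_def by simp
qed

lemma wderiv_Gop:
  assumes "f \<in> DA2 w"
  shows "wderiv w (Gop w f) (\<lambda>x. dH w (Aop w (Aop w f)) x - w\<^sup>2 / 2 * Aop w f x)"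
proof -
  have fa: "wderiv w f (Aop w f)" and ab: "Aop w (Aop w f) \<in> Hsp w"
    using assms wderiv_Aop by (auto simp: DA2_def)
  have bc: "wderiv w (Aop w (Aop w f)) (dH w (Aop w (Aop w f)))"
    using wderiv_dH[OF ab] .
  have "L2w w (\<lambda>x. dH w (Aop w (Aop w f)) x - w\<^sup>2 / 2 * Aop w f x)"
    using fa bc by (intro L2w_diff L2w_cmult) (simp_all add: wderiv_iff)
  moreover have "ac_deriv (Gop w f) (\<lambda>x. dH w (Aop w (Aop w f)) x - w\<^sup>2 / 2 * Aop w f x)"
    using fa bc unfolding Gop_def by (intro ac_deriv_diff ac_deriv_cmult) (simp_all add: wderiv_iff)
  ultimately show ?thesis by (simp add: wderiv_iff)
qed

lemma Hinner_Gop_self: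
  assumes w: "w > 0" and f: "f \<in> DA2 w"
  shows "Hinner w (Gop w f) f
    = - (w\<^sup>2 / 2) * (Lim at_top f)\<^sup>2 - (\<integral>x. Aop w (Aop w f) x * Aop w (Aop w f) x * exp (w * x) \<partial>lborel)"
proof -
  define a where "a = Aop w f"
  define b where "b = Aop w a"
  define c where "c = dH w b"
  have fa: "wderiv w f a" and ab: "wderiv w a b" and bH: "b \<in> Hsp w"
    using f wderiv_Aop unfolding a_def b_def DA2_def by auto
  have bc: "wderiv w b c" unfolding c_def by (rule wderiv_dH[OF bH])
  have Gd: "wderiv w (Gop w f) (\<lambda>x. c x - w\<^sup>2 / 2 * a x)"
    using wderiv_Gop[OF f] unfolding a_def b_def c_def .
  have La: "L2w w a" and [measurable]: "a \<in> borel_measurable borel" "c \<in> borel_measurable borel"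
    using fa bc by (auto simp: wderiv_iff L2w_def)
  have [measurable]: "dH w (Gop w f) \<in> borel_measurable borel" "dH w f \<in> borel_measurable borel"
    using wderiv_dH[OF HspI[OF Gd]] wderiv_dH[OF HspI[OF fa]] by (auto simp: wderiv_iff L2w_def)
  have "AE x in lborel. dH w (Gop w f) x = c x - w\<^sup>2 / 2 * a x"
    using wderiv_dH[OF HspI[OF Gd]] Gd by (auto simp: wderiv_iff intro: ac_deriv_unique_AE)
  moreover have "AE x in lborel. dH w f x = a x"
    using wderiv_dH[OF HspI[OF fa]] fa by (auto simp: wderiv_iff intro: ac_deriv_unique_AE)
  ultimately have "(\<integral>x. dH w (Gop w f) x * dH w f x * exp (w * x) \<partial>lborel)
      = (\<integral>x. (c x - w\<^sup>2 / 2 * a x) * a x * exp (w * x) \<partial>lborel)"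
    by (intro integral_cong_AE) auto
  also have "\<dots> = - (\<integral>x. b x * b x * exp (w * x) \<partial>lborel)"
    by (rule integral_by_parts_weighted[OF La ab bc])
  finally have integral_part: "(\<integral>x. dH w (Gop w f) x * dH w f x * exp (w * x) \<partial>lborel)
      = - (\<integral>x. b x * b x * exp (w * x) \<partial>lborel)" .
  obtain L where fL: "(f \<longlongrightarrow> L) at_top" using wderiv_convergent_at_top[OF w fa] by blast
  obtain Lb where bL: "(b \<longlongrightarrow> Lb) at_top" using wderiv_convergent_at_top[OF w bc] by blast
  have "Lb = 0" using L2w_tendsto_at_top_eq_0[OF w _ bL] ab by (simp add: wderiv_iff)
  then have "((\<lambda>x. Gop w f x * f x) \<longlongrightarrow> - (w\<^sup>2 / 2) * L\<^sup>2) at_top"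
    using tendsto_mult[OF tendsto_diff[OF bL tendsto_mult[OF tendsto_const[of "w\<^sup>2 / 2"] fL]] fL]
    unfolding Gop_def b_def a_def by (simp add: power2_eq_square mult.assoc)
  moreover have "Lim at_top f = L" using fL by (rule tendsto_Lim[rotated]) simp
  ultimately show ?thesis
    unfolding Hinner_def integral_part by (simp add: tendsto_Lim a_def b_def)
qed

section \<open>Surjectivity of I - G\<close>

lemma exists_resolvent_pair:
  assumes k: "\<bar>w\<bar> / 2 < k" and g: "L2w w g"
  shows "\<exists>u v. L2w w u \<and> wderiv w u v \<and> wderiv w v (\<lambda>x. k\<^sup>2 * u x - g x)"
proof -
  define A where "A = exp_conv_below k g"
  define B where "B = exp_conv_above k g"
  have k_pos: "k > 0" and kb: "w/2 < k" and ka: "-(w/2) < k" using k by auto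
  have dA: "ac_deriv A (\<lambda>x. g x - k * A x)" and LA: "L2w w A"
    using wderiv_exp_conv_below[OF kb g] L2w_exp_conv_below[OF kb g] by (auto simp: A_def wderiv_iff)
  have dB: "ac_deriv B (\<lambda>x. k * B x - g x)" and LB: "L2w w B"
    using wderiv_exp_conv_above[OF ka g] L2w_exp_conv_above[OF ka g] by (auto simp: B_def wderiv_iff)
  define u where "u = (\<lambda>x. 1 / (2*k) * (A x + B x))"
  define v where "v = (\<lambda>x. 1/2 * (B x - A x))"
  have "ac_deriv u v"
    using ac_deriv_cmult[OF ac_deriv_add[OF dA dB], of "1 / (2*k)"] unfolding u_def v_def
    by (rule ac_deriv_cong) (use k_pos in \<open>simp_all add: field_simps\<close>)
  moreover have "ac_deriv v (\<lambda>x. k\<^sup>2 * u x - g x)"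
    using ac_deriv_cmult[OF ac_deriv_diff[OF dB dA], of "1/2"] unfolding u_def v_def
    by (rule ac_deriv_cong) (use k_pos in \<open>simp_all add: field_simps power2_eq_square\<close>)
  moreover have Lu: "L2w w u" unfolding u_def by (intro L2w_cmult L2w_add LA LB)
  moreover have "L2w w v" unfolding v_def by (intro L2w_cmult L2w_diff LA LB)
  moreover have "L2w w (\<lambda>x. k\<^sup>2 * u x - g x)" by (intro L2w_diff L2w_cmult Lu g)
  ultimately show ?thesis by (auto simp: wderiv_iff)
qed

lemma resolvent_Gop_solvable:
  assumes w: "w > 0" and h: "h \<in> Hsp w"
  shows "\<exists>f\<in>DA2 w. (\<lambda>x. f x - Gop w f x) = h"
proof -
  define g where "g = dH w h"
  have Lg: "L2w w g" and dh: "ac_deriv h g"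
    using wderiv_dH[OF h] by (auto simp: g_def wderiv_iff)
  define k where "k = sqrt (1 + w\<^sup>2/2)"
  have k2: "k\<^sup>2 = 1 + w\<^sup>2/2" unfolding k_def by (simp add: add_nonneg_nonneg)
  have "(w/2)\<^sup>2 = w\<^sup>2/4" by (simp add: power_divide)
  then have "(w/2)\<^sup>2 < 1 + w\<^sup>2/2" using zero_le_power2[of w] by linarith
  then have "w / 2 < k" unfolding k_def by (rule real_less_rsqrt)
  then have "\<bar>w\<bar> / 2 < k" using w by simp
  then obtain u v where Lu: "L2w w u" and uv: "wderiv w u v" and vu: "wderiv w v (\<lambda>x. k\<^sup>2 * u x - g x)"
    using exists_resolvent_pair[OF _ Lg] by blast
  have k_pos: "k > 0" unfolding k_def by (simp add: add_pos_nonneg)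
  define f where "f = (\<lambda>x. 1/k\<^sup>2 * (h x + v x))"
  have "ac_deriv f u"
    using ac_deriv_cmult[OF ac_deriv_add[OF dh vu[unfolded wderiv_iff, THEN conjunct2]], of "1/k\<^sup>2"]
    unfolding f_def by (rule ac_deriv_cong) (use k_pos in \<open>simp_all add: field_simps\<close>)
  then have fu: "wderiv w f u" using Lu by (simp add: wderiv_iff)
  have fA: "f \<in> DA w \<and> Aop w f = u" and uA: "u \<in> DA w \<and> Aop w u = v"
    using DA_Aop_eqI HspI fu uv vu by blast+
  then have "f \<in> DA2 w" by (simp add: DA2_def)
  moreover have "(\<lambda>x. f x - Gop w f x) = h"
  proof
    fix x
    have "f x - Gop w f x = k\<^sup>2 * f x - v x" unfolding Gop_def fA[THEN conjunct2] uA[THEN conjunct2] k2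
      by (simp add: algebra_simps)
    also have "\<dots> = h x" unfolding f_def using k_pos by simp
    finally show "f x - Gop w f x = h x" .
  qed
  ultimately show ?thesis by blast
qed

theorem proposition5p3:
  fixes w :: real
  assumes "w > 0"
  shows "maximal_dissipative (Hsp w) (Hinner w) (DA2 w) (Gop w)"
  unfolding maximal_dissipative_def
proof (intro conjI ballI)
  show "DA2 w \<subseteq> Hsp w" by (auto simp: DA2_def DA_def)
  fix f assume f: "f \<in> DA2 w"
  show "Gop w f \<in> Hsp w" by (rule HspI[OF wderiv_Gop[OF f]])
  have "0 \<le> (\<integral>x. Aop w (Aop w f) x * Aop w (Aop w f) x * exp (w * x) \<partial>lborel)"
    and "0 \<le> w\<^sup>2 / 2 * (Lim at_top f)\<^sup>2" by simp_all
  then show "Hinner w (Gop w f) f \<le> 0"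
    unfolding Hinner_Gop_self[OF assms f] by linarith
next
  fix h assume "h \<in> Hsp w"
  then show "\<exists>f\<in>DA2 w. (\<lambda>x. f x - Gop w f x) = h" by (rule resolvent_Gop_solvable[OF assms])
qed

end
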